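(* Let $\mathcal X=\mathcal X_1\times\cdots\times\mathcal X_b$, $\mathcal X_i=\mathbb R^{m_i\times n_i}$ with trace inner product and norms $\|\cdot\|_{(i)}$ (dual $\|\cdot\|_{(i)\star}$). Let $f$ be continuously differentiable and let $\mathcal D$ be a distribution on subsets of $[b]$. Assume constants $L^0_{i,S},L^1_{i,S}\ge0$ exist such that for all $S\in\operatorname{supp}(\mathcal D)$, $i\in S$, $X\in\mathcal X$ and $\Gamma$ with $\Gamma_j=0$ for $j\notin S$: $\|\nabla_if(X+\Gamma)-\nabla_if(X)\|_{(i)\star}\le(L^0_{i,S}+L^1_{i,S}\|\nabla_if(X)\|_{(i)\star})\|\Gamma_i\|_{(i)}$. Let $S^k\in\operatorname{supp}(\mathcal D)$, $X^k,M^k\in\mathcal X$, $t_i^k>0$, and define $X^{k+1}$ by $X_i^{k+1}=\operatorname{lmo}_{\mathcal B_i(X_i^k,t_i^k)}(M_i^k)$ for $i\in S^k$ and $X_i^{k+1}=X_i^k$ for $i\notin S^k$. Then $$f(X^{k+1})\le f(X^k)+\sum_{i\in S^k}2t_i^k\|\nabla_if(X^k)-M_i^k\|_{(i)\star}-\sum_{i\in S^k}t_i^k\|\nabla_if(X^k)\|_{(i)\star}+\sum_{i\in S^k}\frac{L^0_{i,S^k}+L^1_{i,S^k}\|\nabla_if(X^k)\|_{(i)\star}}2(t_i^k)^2.$$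
   Context: $\mathcal B_i(Y,t)=\{Z\in\mathcal X_i:\|Z-Y\|_{(i)}\le t\}$ and $\operatorname{lmo}_{\mathcal B}(M)\in\arg\min_{Z\in\mathcal B}\langle M,Z\rangle$. $\operatorname{supp}(\mathcal D)$ is the set of subsets of $[b]$ with positive probability. *)

theory Defs
  imports "HOL-Analysis.Analysis" "HOL-Probability.Probability_Mass_Function"
begin

text \<open>Matrices in R^{m x n} are represented as functions nat => nat => real that vanish
  outside the index range {..<m} x {..<n}.\<close>

definition Mat :: "nat \<Rightarrow> nat \<Rightarrow> (nat \<Rightarrow> nat \<Rightarrow> real) set" where
  "Mat m n = {A. \<forall>r c. (m \<le> r \<or> n \<le> c) \<longrightarrow> A r c = 0}"

definition tr_inner :: "nat \<Rightarrow> nat \<Rightarrow> (nat \<Rightarrow> nat \<Rightarrow> real) \<Rightarrow> (nat \<Rightarrow> nat \<Rightarrow> real) \<Rightarrow> real" where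
  "tr_inner m n A B = (\<Sum>r<m. \<Sum>c<n. A r c * B r c)"

definition is_norm_on :: "nat \<Rightarrow> nat \<Rightarrow> ((nat \<Rightarrow> nat \<Rightarrow> real) \<Rightarrow> real) \<Rightarrow> bool" where
  "is_norm_on m n N \<longleftrightarrow>
     (\<forall>A\<in>Mat m n. 0 \<le> N A \<and> (N A = 0 \<longleftrightarrow> A = (\<lambda>r c. 0))) \<and>
     (\<forall>A\<in>Mat m n. \<forall>a::real. N (\<lambda>r c. a * A r c) = \<bar>a\<bar> * N A) \<and>
     (\<forall>A\<in>Mat m n. \<forall>B\<in>Mat m n. N (\<lambda>r c. A r c + B r c) \<le> N A + N B)"

definition dual_norm :: "nat \<Rightarrow> nat \<Rightarrow> ((nat \<Rightarrow> nat \<Rightarrow> real) \<Rightarrow> real) \<Rightarrow> (nat \<Rightarrow> nat \<Rightarrow> real) \<Rightarrow> real" where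
  "dual_norm m n N G = Sup {tr_inner m n G Z | Z. Z \<in> Mat m n \<and> N Z \<le> 1}"

definition norm_ball :: "nat \<Rightarrow> nat \<Rightarrow> ((nat \<Rightarrow> nat \<Rightarrow> real) \<Rightarrow> real) \<Rightarrow> (nat \<Rightarrow> nat \<Rightarrow> real) \<Rightarrow> real \<Rightarrow> (nat \<Rightarrow> nat \<Rightarrow> real) set" where
  "norm_ball m n N Y t = {Z \<in> Mat m n. N (\<lambda>r c. Z r c - Y r c) \<le> t}"

definition is_lmo :: "nat \<Rightarrow> nat \<Rightarrow> (nat \<Rightarrow> nat \<Rightarrow> real) set \<Rightarrow> (nat \<Rightarrow> nat \<Rightarrow> real) \<Rightarrow> (nat \<Rightarrow> nat \<Rightarrow> real) \<Rightarrow> bool" where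
  "is_lmo m n B M Z \<longleftrightarrow> Z \<in> B \<and> (\<forall>W\<in>B. tr_inner m n M Z \<le> tr_inner m n M W)"

text \<open>Block structure of the product space X = X_0 x ... x X_{b-1}, realised as the
  Euclidean space real^'k: every coordinate k belongs to block blk k < b, and
  pos identifies the coordinates of block i bijectively with the entries of an
  m_i x n_i matrix.\<close>
definition block_structure :: "nat \<Rightarrow> (nat \<Rightarrow> nat) \<Rightarrow> (nat \<Rightarrow> nat) \<Rightarrow> ('k \<Rightarrow> nat) \<Rightarrow> ('k \<Rightarrow> nat \<times> nat) \<Rightarrow> bool" where
  "block_structure b m n blk pos \<longleftrightarrow>
     (\<forall>k. blk k < b) \<and>
     (\<forall>i<b. bij_betw pos {k. blk k = i} ({..<m i} \<times> {..<n i}))"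

definition block :: "('k \<Rightarrow> nat) \<Rightarrow> ('k \<Rightarrow> nat \<times> nat) \<Rightarrow> real^'k \<Rightarrow> nat \<Rightarrow> (nat \<Rightarrow> nat \<Rightarrow> real)" where
  "block blk pos X i = (\<lambda>r c. \<Sum>k\<in>{k. blk k = i \<and> pos k = (r, c)}. X $ k)"

definition grad :: "(real^'k \<Rightarrow> real) \<Rightarrow> real^'k \<Rightarrow> real^'k" where
  "grad f X = (\<chi> k. frechet_derivative f (at X) (axis k 1))"

end

theory Submission
  imports Defs
begin

(* Along the segment from X to X + \<Gamma>, with \<Gamma> supported on the active blocks S, the
   block smoothness condition makes the directional derivative grow at most linearly, which
   gives the descent inequality
   f(X + \<Gamma>) \<le> f(X) + \<Sigma>\<^sub>i <\<nabla>\<^sub>if(X), \<Gamma>\<^sub>i> + \<Sigma>\<^sub>i L\<^sub>i/2 \<parallel>\<Gamma>\<^sub>i\<parallel>\<^sup>2.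
   For the LMO step \<parallel>\<Gamma>\<^sub>i\<parallel> \<le> t\<^sub>i, and optimality over the ball against the points
   X\<^sub>i - t\<^sub>i Z with \<parallel>Z\<parallel> \<le> 1 gives <M\<^sub>i, \<Gamma>\<^sub>i> \<le> -t\<^sub>i \<parallel>M\<^sub>i\<parallel>\<^sub>*. Splitting
   \<nabla>\<^sub>if = (\<nabla>\<^sub>if - M\<^sub>i) + M\<^sub>i and using \<parallel>M\<^sub>i\<parallel>\<^sub>* \<ge> \<parallel>\<nabla>\<^sub>if\<parallel>\<^sub>* - \<parallel>\<nabla>\<^sub>if - M\<^sub>i\<parallel>\<^sub>*
   then bounds <\<nabla>\<^sub>if, \<Gamma>\<^sub>i> by 2 t\<^sub>i \<parallel>\<nabla>\<^sub>if - M\<^sub>i\<parallel>\<^sub>* - t\<^sub>i \<parallel>\<nabla>\<^sub>if\<parallel>\<^sub>*.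
   Dual norms are finite because in finite dimension every norm dominates a multiple of the
   Euclidean norm, by compactness of the unit sphere. *)

lemma subadditive_sum_le:
  fixes h :: "'a::comm_monoid_add \<Rightarrow> real"
  assumes add: "\<And>u v. h (u + v) \<le> h u + h v" and zero: "h 0 = 0"
  shows "h (sum g A) \<le> (\<Sum>a\<in>A. h (g a))"
proof (induction A rule: infinite_finite_induct)
  case (insert a A)
  then show ?case using add[of "g a" "sum g A"] by simp
qed (simp_all add: zero)

lemma subadditive_homogeneous_continuous:
  fixes h :: "'a::euclidean_space \<Rightarrow> real"
  assumes add: "\<And>u v. h (u + v) \<le> h u + h v" and scale: "\<And>a v. h (a *\<^sub>R v) = \<bar>a\<bar> * h v"
  shows "continuous_on UNIV h"
proof -
  have nonneg: "0 \<le> h v" for v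
    using add[of v "-v"] scale[of 0 v] scale[of "-1" v] by simp
  define C where "C = (\<Sum>b\<in>Basis. h b)"
  have bound: "h v \<le> C * norm v" for v
  proof -
    have "h v = h (\<Sum>b\<in>Basis. (v \<bullet> b) *\<^sub>R b)"
      by (simp add: euclidean_representation)
    also have "\<dots> \<le> (\<Sum>b\<in>Basis. h ((v \<bullet> b) *\<^sub>R b))"
      by (rule subadditive_sum_le[OF add]) (use scale[of 0 0] in simp)
    also have "\<dots> = (\<Sum>b\<in>Basis. \<bar>v \<bullet> b\<bar> * h b)"
      by (simp only: scale)
    also have "\<dots> \<le> (\<Sum>b\<in>Basis. norm v * h b)"
      by (intro sum_mono mult_right_mono Basis_le_norm nonneg)
    finally show ?thesis by (simp add: C_def sum_distrib_left mult.commute)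
  qed
  have "C-lipschitz_on UNIV h"
  proof (rule lipschitz_onI)
    fix u v :: 'a
    have "h u \<le> h v + h (u - v)" "h v \<le> h u + h (v - u)"
      using add[of v "u - v"] add[of u "v - u"] by simp_all
    moreover have "h (v - u) = h (u - v)"
      using scale[of "-1" "u - v"] by simp
    ultimately show "dist (h u) (h v) \<le> C * dist u v"
      using bound[of "u - v"] by (simp add: dist_real_def dist_norm)
  qed (simp add: C_def sum_nonneg nonneg)
  then show ?thesis by (rule lipschitz_on_continuous_on)
qed

lemma homogeneous_positive_bounds_norm:
  fixes h :: "'a::euclidean_space \<Rightarrow> real"
  assumes V: "subspace V" and cont: "continuous_on V h"
    and scale: "\<And>a v. h (a *\<^sub>R v) = \<bar>a\<bar> * h v"
    and pos: "\<And>v. v \<in> V \<Longrightarrow> v \<noteq> 0 \<Longrightarrow> 0 < h v"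
  shows "\<exists>K\<ge>0. \<forall>v\<in>V. norm v \<le> K * h v"
proof -
  have normalize: "(1 / norm v) *\<^sub>R v \<in> V \<inter> sphere 0 1" if "v \<in> V" "v \<noteq> 0" for v
    using that V by (auto simp: subspace_scale)
  show ?thesis
  proof (cases "V \<inter> sphere 0 1 = {}")
    case True
    then have "V \<subseteq> {0}" using normalize by blast
    then show ?thesis by (intro exI[of _ 0]) auto
  next
    case False
    have "compact (V \<inter> sphere 0 1)"
      using closed_subspace[OF V] by (intro closed_Int_compact compact_sphere)
    then obtain x where x: "x \<in> V \<inter> sphere 0 1" and min: "\<forall>y\<in>V \<inter> sphere 0 1. h x \<le> h y"
      using continuous_attains_inf[OF _ False] continuous_on_subset[OF cont] by (metis inf_le1)
    have hx: "0 < h x" using x pos[of x] by fastforce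
    have "norm v \<le> 1 / h x * h v" if v: "v \<in> V" for v
    proof (cases "v = 0")
      case False
      have "h x \<le> h ((1 / norm v) *\<^sub>R v)" using min normalize[OF v False] by blast
      also have "\<dots> = h v / norm v" using scale by simp
      finally show ?thesis using hx False by (simp add: field_simps)
    qed (use scale[of 0 0] in simp)
    then show ?thesis using hx by (intro exI[of _ "1 / h x"]) auto
  qed
qed

lemma descent_along_segment:
  fixes f :: "'a::real_normed_vector \<Rightarrow> real"
  assumes diff: "\<And>s. s \<in> {0..1} \<Longrightarrow> f differentiable (at (X + s *\<^sub>R \<Gamma>))"
    and slope: "\<And>s. s \<in> {0..1} \<Longrightarrow> frechet_derivative f (at (X + s *\<^sub>R \<Gamma>)) \<Gamma> \<le> A + s * C"
  shows "f (X + \<Gamma>) \<le> f X + A + C / 2"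
proof -
  define \<phi> where "\<phi> s = f (X + s *\<^sub>R \<Gamma>) - s * A - s\<^sup>2 / 2 * C" for s
  have deriv: "(\<phi> has_real_derivative frechet_derivative f (at (X + s *\<^sub>R \<Gamma>)) \<Gamma> - A - s * C) (at s)"
    if s: "s \<in> {0..1}" for s
  proof -
    let ?f' = "frechet_derivative f (at (X + s *\<^sub>R \<Gamma>))"
    have f': "(f has_derivative ?f') (at (X + s *\<^sub>R \<Gamma>))"
      using diff[OF s] frechet_derivative_works by blast
    have "((\<lambda>s. X + s *\<^sub>R \<Gamma>) has_derivative (\<lambda>h. h *\<^sub>R \<Gamma>)) (at s)"
      by (auto intro!: derivative_eq_intros)
    from has_derivative_compose[OF this f']
    have "((\<lambda>s. f (X + s *\<^sub>R \<Gamma>)) has_derivative (\<lambda>h. ?f' (h *\<^sub>R \<Gamma>))) (at s)"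
      by (simp add: o_def)
    then have "((\<lambda>s. f (X + s *\<^sub>R \<Gamma>)) has_real_derivative ?f' \<Gamma>) (at s)"
      by (rule has_derivative_imp_has_field_derivative)
         (simp add: linear_scale[OF has_derivative_linear[OF f']])
    moreover have "((\<lambda>s. s * A) has_real_derivative A) (at s)"
      by (auto intro!: derivative_eq_intros)
    moreover have "((\<lambda>s. s\<^sup>2 / 2 * C) has_real_derivative s * C) (at s)"
      by (auto intro!: derivative_eq_intros)
    ultimately show ?thesis
      unfolding \<phi>_def by (intro DERIV_diff)
  qed
  have nonpos: "frechet_derivative f (at (X + s *\<^sub>R \<Gamma>)) \<Gamma> - A - s * C \<le> 0" if "s \<in> {0..1}" for s
    using slope[OF that] by simp
  have "\<phi> 1 \<le> \<phi> 0"
    using deriv_nonpos_imp_antimono[of 0 1 \<phi>, OF deriv nonpos] by simp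
  then show ?thesis by (simp add: \<phi>_def)
qed

lemma frechet_derivative_eq_inner_grad:
  fixes f :: "real^'k::finite \<Rightarrow> real"
  assumes "f differentiable (at Y)"
  shows "frechet_derivative f (at Y) G = grad f Y \<bullet> G"
proof -
  have lin: "linear (frechet_derivative f (at Y))"
    using assms frechet_derivative_works has_derivative_linear by blast
  have "frechet_derivative f (at Y) G = frechet_derivative f (at Y) (\<Sum>k\<in>UNIV. G $ k *\<^sub>R axis k 1)"
    using basis_expansion[of G] by (simp add: scalar_mult_eq_scaleR)
  also have "\<dots> = (\<Sum>k\<in>UNIV. G $ k * frechet_derivative f (at Y) (axis k 1))"
    by (simp add: linear_sum[OF lin] linear_scale[OF lin])
  finally show ?thesis by (simp add: grad_def inner_vec_def mult.commute)
qed

lemma Mat_diff: "A \<in> Mat m n \<Longrightarrow> B \<in> Mat m n \<Longrightarrow> (\<lambda>r c. A r c - B r c) \<in> Mat m n"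
  and Mat_scale: "A \<in> Mat m n \<Longrightarrow> (\<lambda>r c. a * A r c) \<in> Mat m n"
  and Mat_zero: "(\<lambda>r c. 0) \<in> Mat m n"
  unfolding Mat_def by auto

lemma tr_inner_add_left: "tr_inner m n (\<lambda>r c. A r c + B r c) Z = tr_inner m n A Z + tr_inner m n B Z"
  and tr_inner_diff_left: "tr_inner m n (\<lambda>r c. A r c - B r c) Z = tr_inner m n A Z - tr_inner m n B Z"
  and tr_inner_diff_right: "tr_inner m n G (\<lambda>r c. A r c - B r c) = tr_inner m n G A - tr_inner m n G B"
  and tr_inner_scale_right: "tr_inner m n G (\<lambda>r c. a * Z r c) = a * tr_inner m n G Z"
  and tr_inner_zero_right: "tr_inner m n G (\<lambda>r c. 0) = 0"
  unfolding tr_inner_def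
  by (simp_all add: sum.distrib sum_subtractf sum_distrib_left algebra_simps)

text \<open>The second assumption holds for every norm, Mat m n being finite-dimensional;
  for the blocks of a block structure this is matrix_norm_block.\<close>
locale matrix_norm =
  fixes m n :: nat and N :: "(nat \<Rightarrow> nat \<Rightarrow> real) \<Rightarrow> real"
  assumes is_norm: "is_norm_on m n N"
    and dual_bdd: "\<And>G. G \<in> Mat m n \<Longrightarrow> bdd_above {tr_inner m n G Z | Z. Z \<in> Mat m n \<and> N Z \<le> 1}"
begin

lemma N_nonneg: "A \<in> Mat m n \<Longrightarrow> 0 \<le> N A"
  and N_eq_0_iff: "A \<in> Mat m n \<Longrightarrow> N A = 0 \<longleftrightarrow> A = (\<lambda>r c. 0)"
  and N_scale: "A \<in> Mat m n \<Longrightarrow> N (\<lambda>r c. a * A r c) = \<bar>a\<bar> * N A"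
  using is_norm unfolding is_norm_on_def by auto

lemma N_zero: "N (\<lambda>r c. 0) = 0"
  using N_eq_0_iff[OF Mat_zero] by blast

lemma tr_inner_le_dual_norm:
  assumes "G \<in> Mat m n" "Z \<in> Mat m n" "N Z \<le> 1"
  shows "tr_inner m n G Z \<le> dual_norm m n N G"
  unfolding dual_norm_def by (rule cSup_upper) (use assms dual_bdd in auto)

lemma dual_norm_nonneg: "G \<in> Mat m n \<Longrightarrow> 0 \<le> dual_norm m n N G"
  using tr_inner_le_dual_norm[OF _ Mat_zero] by (simp add: N_zero tr_inner_zero_right)

lemma tr_inner_le_dual_norm_mult:
  assumes G: "G \<in> Mat m n" and Z: "Z \<in> Mat m n"
  shows "tr_inner m n G Z \<le> dual_norm m n N G * N Z"
proof (cases "N Z = 0")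
  case True
  then show ?thesis using N_eq_0_iff[OF Z] by (simp add: tr_inner_zero_right)
next
  case False
  then have NZ: "0 < N Z" using N_nonneg[OF Z] by simp
  have "N (\<lambda>r c. (1 / N Z) * Z r c) = 1"
    using N_scale[OF Z, of "1 / N Z"] NZ by simp
  then have "tr_inner m n G (\<lambda>r c. (1 / N Z) * Z r c) \<le> dual_norm m n N G"
    by (intro tr_inner_le_dual_norm G Mat_scale Z) simp
  then have "1 / N Z * tr_inner m n G Z \<le> dual_norm m n N G"
    by (simp only: tr_inner_scale_right)
  then show ?thesis using NZ by (simp add: field_simps)
qed

lemma dual_norm_least:
  assumes "\<And>Z. Z \<in> Mat m n \<Longrightarrow> N Z \<le> 1 \<Longrightarrow> tr_inner m n G Z \<le> B"
  shows "dual_norm m n N G \<le> B"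
  unfolding dual_norm_def
  by (rule cSup_least) (use assms Mat_zero N_zero in fastforce)+

lemma dual_norm_triangle:
  assumes "G \<in> Mat m n" "H \<in> Mat m n"
  shows "dual_norm m n N (\<lambda>r c. G r c + H r c) \<le> dual_norm m n N G + dual_norm m n N H"
  using assms tr_inner_le_dual_norm
  by (intro dual_norm_least) (simp add: tr_inner_add_left add_mono)

lemma lmo_inner_le:
  assumes lmo: "is_lmo m n (norm_ball m n N x t) M x'" and x: "x \<in> Mat m n" and t: "0 < t"
  shows "tr_inner m n M (\<lambda>r c. x' r c - x r c) \<le> - t * dual_norm m n N M"
proof -
  have "dual_norm m n N M \<le> - tr_inner m n M (\<lambda>r c. x' r c - x r c) / t"
  proof (rule dual_norm_least)
    fix Z assume Z: "Z \<in> Mat m n" "N Z \<le> 1"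
    have "N (\<lambda>r c. (x r c - t * Z r c) - x r c) = t * N Z"
      using N_scale[OF Z(1), of "- t"] t by simp
    then have "(\<lambda>r c. x r c - t * Z r c) \<in> norm_ball m n N x t"
      using Z t x unfolding norm_ball_def by (auto intro: Mat_diff Mat_scale)
    then have "tr_inner m n M x' \<le> tr_inner m n M (\<lambda>r c. x r c - t * Z r c)"
      using lmo unfolding is_lmo_def by blast
    then show "tr_inner m n M Z \<le> - tr_inner m n M (\<lambda>r c. x' r c - x r c) / t"
      using t by (simp add: tr_inner_diff_right tr_inner_scale_right field_simps)
  qed
  then show ?thesis using t by (simp add: field_simps)
qed

lemma lmo_step_bound:
  assumes lmo: "is_lmo m n (norm_ball m n N x t) M x'" and t: "0 < t" and L: "0 \<le> L"
    and x: "x \<in> Mat m n" and M: "M \<in> Mat m n" and g: "g \<in> Mat m n"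
  shows "tr_inner m n g (\<lambda>r c. x' r c - x r c) + L / 2 * (N (\<lambda>r c. x' r c - x r c))\<^sup>2
    \<le> 2 * t * dual_norm m n N (\<lambda>r c. g r c - M r c) - t * dual_norm m n N g + L / 2 * t\<^sup>2"
proof -
  let ?\<Delta> = "\<lambda>r c. x' r c - x r c" and ?gM = "\<lambda>r c. g r c - M r c"
  have \<Delta>: "?\<Delta> \<in> Mat m n" "N ?\<Delta> \<le> t"
    using lmo x unfolding is_lmo_def norm_ball_def by (auto intro: Mat_diff)
  have gM: "?gM \<in> Mat m n" using g M by (rule Mat_diff)
  have "tr_inner m n ?gM ?\<Delta> \<le> dual_norm m n N ?gM * N ?\<Delta>"
    by (rule tr_inner_le_dual_norm_mult[OF gM \<Delta>(1)])
  also have "\<dots> \<le> t * dual_norm m n N ?gM"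
    using mult_left_mono[OF \<Delta>(2) dual_norm_nonneg[OF gM]] by (simp add: mult.commute)
  finally have "tr_inner m n ?gM ?\<Delta> \<le> t * dual_norm m n N ?gM" .
  moreover have "tr_inner m n M ?\<Delta> \<le> - t * dual_norm m n N M"
    by (rule lmo_inner_le[OF lmo x t])
  moreover have "t * dual_norm m n N g \<le> t * dual_norm m n N ?gM + t * dual_norm m n N M"
    using dual_norm_triangle[OF gM M] t by (simp flip: distrib_left)
  moreover have "tr_inner m n g ?\<Delta> = tr_inner m n ?gM ?\<Delta> + tr_inner m n M ?\<Delta>"
    by (simp add: tr_inner_diff_left)
  moreover have "L / 2 * (N ?\<Delta>)\<^sup>2 \<le> L / 2 * t\<^sup>2"
    using \<Delta>(2) N_nonneg[OF \<Delta>(1)] L by (simp add: mult_left_mono power_mono)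
  ultimately show ?thesis by linarith
qed

end

lemma block_add: "block blk pos (X + Y) i = (\<lambda>r c. block blk pos X i r c + block blk pos Y i r c)"
  and block_diff: "block blk pos (X - Y) i = (\<lambda>r c. block blk pos X i r c - block blk pos Y i r c)"
  and block_scale: "block blk pos (a *\<^sub>R X) i = (\<lambda>r c. a * block blk pos X i r c)"
  unfolding block_def by (simp_all add: sum.distrib sum_subtractf sum_distrib_left)

definition embed_block :: "('k \<Rightarrow> nat) \<Rightarrow> ('k \<Rightarrow> nat \<times> nat) \<Rightarrow> nat \<Rightarrow> (nat \<Rightarrow> nat \<Rightarrow> real) \<Rightarrow> real^'k"
  where "embed_block blk pos i Z = (\<chi> k. if blk k = i then Z (fst (pos k)) (snd (pos k)) else 0)"

locale block_decomposition =
  fixes b :: nat and m n :: "nat \<Rightarrow> nat" and blk :: "'k::finite \<Rightarrow> nat" and pos :: "'k \<Rightarrow> nat \<times> nat"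
  assumes block_structure: "block_structure b m n blk pos"
begin

lemma blk_less: "blk k < b"
  and pos_bij: "i < b \<Longrightarrow> bij_betw pos {k. blk k = i} ({..<m i} \<times> {..<n i})"
  using block_structure unfolding block_structure_def by auto

lemma block_component: "block blk pos X (blk k) (fst (pos k)) (snd (pos k)) = X $ k"
proof -
  have "inj_on pos {k'. blk k' = blk k}"
    using pos_bij[OF blk_less] by (rule bij_betw_imp_inj_on)
  then have "{k'. blk k' = blk k \<and> pos k' = (fst (pos k), snd (pos k))} = {k}"
    by (auto simp: inj_on_def)
  then show ?thesis unfolding block_def by simp
qed

lemma block_Mat: "i < b \<Longrightarrow> block blk pos X i \<in> Mat (m i) (n i)"
  using bij_betwE[OF pos_bij] unfolding Mat_def block_def
  by (fastforce intro!: sum.neutral)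

lemma tr_inner_block:
  assumes i: "i < b"
  shows "tr_inner (m i) (n i) (block blk pos X i) (block blk pos Y i) = (\<Sum>k | blk k = i. X $ k * Y $ k)"
proof -
  have "tr_inner (m i) (n i) (block blk pos X i) (block blk pos Y i)
      = (\<Sum>(r, c)\<in>{..<m i} \<times> {..<n i}. block blk pos X i r c * block blk pos Y i r c)"
    unfolding tr_inner_def by (simp add: sum.cartesian_product)
  also have "\<dots> = (\<Sum>k | blk k = i. block blk pos X i (fst (pos k)) (snd (pos k))
                                    * block blk pos Y i (fst (pos k)) (snd (pos k)))"
    by (subst sum.reindex_bij_betw[OF pos_bij[OF i], symmetric]) (simp add: case_prod_beta)
  also have "\<dots> = (\<Sum>k | blk k = i. X $ k * Y $ k)"
    by (rule sum.cong) (auto simp flip: block_component)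
  finally show ?thesis .
qed

lemma inner_eq_sum_tr_inner_blocks:
  assumes S: "S \<subseteq> {..<b}" and supp: "\<forall>k. blk k \<notin> S \<longrightarrow> \<Gamma> $ k = 0"
  shows "X \<bullet> \<Gamma> = (\<Sum>i\<in>S. tr_inner (m i) (n i) (block blk pos X i) (block blk pos \<Gamma> i))"
proof -
  have "X \<bullet> \<Gamma> = (\<Sum>k | blk k \<in> S. X $ k * \<Gamma> $ k)"
    unfolding inner_vec_def inner_real_def using supp by (intro sum.mono_neutral_right) auto
  also have "\<dots> = (\<Sum>i\<in>S. \<Sum>k | blk k = i. X $ k * \<Gamma> $ k)"
    using finite_subset[OF S] by (subst sum.group[symmetric]) (auto intro!: sum.cong)
  also have "\<dots> = (\<Sum>i\<in>S. tr_inner (m i) (n i) (block blk pos X i) (block blk pos \<Gamma> i))"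
    using S by (intro sum.cong) (auto simp: tr_inner_block)
  finally show ?thesis .
qed

lemma block_embed_block:
  assumes i: "i < b" and Z: "Z \<in> Mat (m i) (n i)"
  shows "block blk pos (embed_block blk pos i Z) i = Z"
proof (intro ext)
  fix r c
  show "block blk pos (embed_block blk pos i Z) i r c = Z r c"
  proof (cases "(r, c) \<in> {..<m i} \<times> {..<n i}")
    case True
    then obtain k where "blk k = i" "pos k = (r, c)"
      using bij_betw_imp_surj_on[OF pos_bij[OF i]] by (metis (mono_tags) imageE mem_Collect_eq)
    then show ?thesis
      using block_component[of "embed_block blk pos i Z" k] by (simp add: embed_block_def)
  next
    case False
    then show ?thesis using block_Mat[OF i] Z unfolding Mat_def by auto
  qed
qed


lemma matrix_norm_block:
  assumes i: "i < b" and N: "is_norm_on (m i) (n i) N"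
  shows "matrix_norm (m i) (n i) N"
proof
  define V where "V = {v :: real^'k. \<forall>k. blk k \<noteq> i \<longrightarrow> v $ k = 0}"
  define h where "h v = N (block blk pos v i)" for v :: "real^'k"
  have V: "subspace V" unfolding subspace_def V_def by auto
  have scale: "h (a *\<^sub>R v) = \<bar>a\<bar> * h v" for a v
    using N block_Mat[OF i] unfolding h_def block_scale is_norm_on_def by simp
  have add: "h (u + v) \<le> h u + h v" for u v
    using N block_Mat[OF i] unfolding h_def block_add is_norm_on_def by simp
  have pos: "0 < h v" if "v \<in> V" "v \<noteq> 0" for v
  proof -
    obtain k where k: "v $ k \<noteq> 0" using \<open>v \<noteq> 0\<close> by (metis vec_eq_iff zero_index)
    with \<open>v \<in> V\<close> have "blk k = i" unfolding V_def by auto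
    with k block_component[of v k] have "block blk pos v i \<noteq> (\<lambda>r c. 0)" by force
    then show ?thesis
      using N block_Mat[OF i] unfolding h_def is_norm_on_def by (metis order_le_less)
  qed
  obtain K where K: "K \<ge> 0" "\<forall>v\<in>V. norm v \<le> K * h v"
    using homogeneous_positive_bounds_norm[OF V _ scale pos]
      continuous_on_subset[OF subadditive_homogeneous_continuous[OF add scale]] by blast
  have embed_V: "embed_block blk pos i Z \<in> V" for Z
    unfolding V_def embed_block_def by simp
  have inner: "tr_inner (m i) (n i) G Z = embed_block blk pos i G \<bullet> embed_block blk pos i Z"
    if "G \<in> Mat (m i) (n i)" "Z \<in> Mat (m i) (n i)" for G Z
    using inner_eq_sum_tr_inner_blocks[of "{i}" "embed_block blk pos i Z"] embed_V[of Z] i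
    by (simp add: V_def block_embed_block[OF i that(1)] block_embed_block[OF i that(2)])
  fix G assume G: "G \<in> Mat (m i) (n i)"
  show "bdd_above {tr_inner (m i) (n i) G Z | Z. Z \<in> Mat (m i) (n i) \<and> N Z \<le> 1}"
  proof (rule bdd_aboveI, safe)
    fix Z assume Z: "Z \<in> Mat (m i) (n i)" "N Z \<le> 1"
    have "tr_inner (m i) (n i) G Z \<le> norm (embed_block blk pos i G) * norm (embed_block blk pos i Z)"
      unfolding inner[OF G Z(1)] by (rule norm_cauchy_schwarz)
    also have "\<dots> \<le> norm (embed_block blk pos i G) * K"
    proof (rule mult_left_mono)
      have "norm (embed_block blk pos i Z) \<le> K * N Z"
        using K(2) embed_V[of Z] block_embed_block[OF i Z(1)] unfolding h_def by metis
      also have "\<dots> \<le> K" using K(1) Z(2) by (simp add: mult_left_le)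
      finally show "norm (embed_block blk pos i Z) \<le> K" .
    qed simp
    finally show "tr_inner (m i) (n i) G Z \<le> norm (embed_block blk pos i G) * K" .
  qed
qed (fact N)

lemma block_lmo_step_bound:
  assumes i: "i < b" and N: "is_norm_on (m i) (n i) N" and t: "0 < t" and L: "0 \<le> L"
    and lmo: "is_lmo (m i) (n i) (norm_ball (m i) (n i) N (block blk pos X i) t)
        (block blk pos M i) (block blk pos X' i)"
  shows "tr_inner (m i) (n i) (block blk pos G i) (block blk pos (X' - X) i)
      + L / 2 * (N (block blk pos (X' - X) i))\<^sup>2
    \<le> 2 * t * dual_norm (m i) (n i) N (\<lambda>r c. block blk pos G i r c - block blk pos M i r c)
      - t * dual_norm (m i) (n i) N (block blk pos G i) + L / 2 * t\<^sup>2"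
  unfolding block_diff
  by (rule matrix_norm.lmo_step_bound[OF matrix_norm_block[OF i N] lmo t L block_Mat block_Mat block_Mat])
    (use i in simp_all)

lemma components_diff_eq_0_if_blocks_eq:
  assumes "\<forall>i<b. i \<notin> S \<longrightarrow> block blk pos Y i = block blk pos X i"
  shows "\<forall>k. blk k \<notin> S \<longrightarrow> (Y - X) $ k = 0"
  using assms blk_less block_component by (metis diff_self right_minus_eq vector_minus_component)

lemma block_descent:
  fixes f :: "real^'k \<Rightarrow> real" and nrm :: "nat \<Rightarrow> (nat \<Rightarrow> nat \<Rightarrow> real) \<Rightarrow> real"
  assumes diff: "\<forall>Y. f differentiable (at Y)"
    and norms: "\<forall>i\<in>S. is_norm_on (m i) (n i) (nrm i)"
    and S: "S \<subseteq> {..<b}"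
    and supp: "\<forall>k. blk k \<notin> S \<longrightarrow> \<Gamma> $ k = 0"
    and smooth: "\<forall>i\<in>S. \<forall>\<Gamma>'. (\<forall>k. blk k \<notin> S \<longrightarrow> \<Gamma>' $ k = 0) \<longrightarrow>
        dual_norm (m i) (n i) (nrm i)
          (\<lambda>r c. block blk pos (grad f (X + \<Gamma>')) i r c - block blk pos (grad f X) i r c)
        \<le> L i * nrm i (block blk pos \<Gamma>' i)"
  shows "f (X + \<Gamma>) \<le> f X
      + (\<Sum>i\<in>S. tr_inner (m i) (n i) (block blk pos (grad f X) i) (block blk pos \<Gamma> i))
      + (\<Sum>i\<in>S. L i / 2 * (nrm i (block blk pos \<Gamma> i))\<^sup>2)"
proof -
  let ?A = "\<Sum>i\<in>S. tr_inner (m i) (n i) (block blk pos (grad f X) i) (block blk pos \<Gamma> i)"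
  let ?C = "\<Sum>i\<in>S. L i * (nrm i (block blk pos \<Gamma> i))\<^sup>2"
  have "frechet_derivative f (at (X + s *\<^sub>R \<Gamma>)) \<Gamma> \<le> ?A + s * ?C" if s: "s \<in> {0..1}" for s
  proof -
    let ?\<delta> = "grad f (X + s *\<^sub>R \<Gamma>) - grad f X"
    have "frechet_derivative f (at (X + s *\<^sub>R \<Gamma>)) \<Gamma> - ?A = ?\<delta> \<bullet> \<Gamma>"
      using diff by (simp add: frechet_derivative_eq_inner_grad inner_diff_left
          inner_eq_sum_tr_inner_blocks[OF S supp, of "grad f X"])
    also have "\<dots> = (\<Sum>i\<in>S. tr_inner (m i) (n i) (block blk pos ?\<delta> i) (block blk pos \<Gamma> i))"
      by (rule inner_eq_sum_tr_inner_blocks[OF S supp])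
    also have "\<dots> \<le> (\<Sum>i\<in>S. s * (L i * (nrm i (block blk pos \<Gamma> i))\<^sup>2))"
    proof (rule sum_mono)
      fix i assume "i \<in> S"
      then have i: "i < b" using S by auto
      interpret matrix_norm "m i" "n i" "nrm i"
        using matrix_norm_block[OF i] norms \<open>i \<in> S\<close> by blast
      let ?\<gamma> = "nrm i (block blk pos \<Gamma> i)"
      have "dual_norm (m i) (n i) (nrm i) (block blk pos ?\<delta> i) \<le> L i * nrm i (block blk pos (s *\<^sub>R \<Gamma>) i)"
        using smooth \<open>i \<in> S\<close> supp unfolding block_diff by simp
      also have "\<dots> = s * L i * ?\<gamma>"
        using s N_scale[OF block_Mat[OF i]] by (simp add: block_scale)
      finally have \<delta>: "dual_norm (m i) (n i) (nrm i) (block blk pos ?\<delta> i) \<le> s * L i * ?\<gamma>" .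
      have "tr_inner (m i) (n i) (block blk pos ?\<delta> i) (block blk pos \<Gamma> i)
          \<le> dual_norm (m i) (n i) (nrm i) (block blk pos ?\<delta> i) * ?\<gamma>"
        by (intro tr_inner_le_dual_norm_mult block_Mat i)
      also have "\<dots> \<le> s * L i * ?\<gamma> * ?\<gamma>"
        by (rule mult_right_mono[OF \<delta> N_nonneg[OF block_Mat[OF i]]])
      finally show "tr_inner (m i) (n i) (block blk pos ?\<delta> i) (block blk pos \<Gamma> i) \<le> s * (L i * ?\<gamma>\<^sup>2)"
        by (simp add: power2_eq_square mult_ac)
    qed
    finally show ?thesis by (simp add: sum_distrib_left)
  qed
  with diff have "f (X + \<Gamma>) \<le> f X + ?A + ?C / 2"
    by (intro descent_along_segment) auto
  then show ?thesis by (simp add: sum_divide_distrib)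
qed

end

theorem lemma6:
  fixes b :: nat and m n :: "nat \<Rightarrow> nat"
    and blk :: "'k::finite \<Rightarrow> nat" and pos :: "'k \<Rightarrow> nat \<times> nat"
    and nrm :: "nat \<Rightarrow> (nat \<Rightarrow> nat \<Rightarrow> real) \<Rightarrow> real"
    and f :: "real^'k \<Rightarrow> real"
    and D :: "nat set pmf"
    and L0 L1 :: "nat \<Rightarrow> nat set \<Rightarrow> real"
    and S :: "nat set" and Xk Mk Xk1 :: "real^'k" and t :: "nat \<Rightarrow> real"
  assumes blocks: "block_structure b m n blk pos"
    and norms: "\<forall>i<b. is_norm_on (m i) (n i) (nrm i)"
    and diff: "\<forall>X. f differentiable (at X)"
    and cont: "continuous_on UNIV (grad f)"
    and D_sub: "\<forall>T\<in>set_pmf D. T \<subseteq> {..<b}"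
    and L_nonneg: "\<forall>T\<in>set_pmf D. \<forall>i\<in>T. 0 \<le> L0 i T \<and> 0 \<le> L1 i T"
    and smooth: "\<forall>T\<in>set_pmf D. \<forall>i\<in>T. \<forall>X \<Gamma>. (\<forall>k. blk k \<notin> T \<longrightarrow> \<Gamma> $ k = 0) \<longrightarrow>
        dual_norm (m i) (n i) (nrm i)
          (\<lambda>r c. block blk pos (grad f (X + \<Gamma>)) i r c - block blk pos (grad f X) i r c)
        \<le> (L0 i T + L1 i T * dual_norm (m i) (n i) (nrm i) (block blk pos (grad f X) i))
           * nrm i (block blk pos \<Gamma> i)"
    and S_supp: "S \<in> set_pmf D"
    and t_pos: "\<forall>i\<in>S. 0 < t i"
    and step_in: "\<forall>i\<in>S. is_lmo (m i) (n i)
        (norm_ball (m i) (n i) (nrm i) (block blk pos Xk i) (t i))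
        (block blk pos Mk i) (block blk pos Xk1 i)"
    and step_out: "\<forall>i<b. i \<notin> S \<longrightarrow> block blk pos Xk1 i = block blk pos Xk i"
  shows "f Xk1 \<le> f Xk
      + (\<Sum>i\<in>S. 2 * t i * dual_norm (m i) (n i) (nrm i)
                     (\<lambda>r c. block blk pos (grad f Xk) i r c - block blk pos Mk i r c))
      - (\<Sum>i\<in>S. t i * dual_norm (m i) (n i) (nrm i) (block blk pos (grad f Xk) i))
      + (\<Sum>i\<in>S. (L0 i S + L1 i S * dual_norm (m i) (n i) (nrm i) (block blk pos (grad f Xk) i)) / 2
                 * (t i)^2)"
proof -
  interpret block_decomposition b m n blk pos by unfold_locales (fact blocks)
  have S: "S \<subseteq> {..<b}" using D_sub S_supp by blast
  define \<Gamma> where "\<Gamma> = Xk1 - Xk"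
  define L where "L i = L0 i S + L1 i S * dual_norm (m i) (n i) (nrm i) (block blk pos (grad f Xk) i)"
    for i
  have block_i: "i < b" "is_norm_on (m i) (n i) (nrm i)" "0 \<le> L i" if "i \<in> S" for i
    using that S norms L_nonneg S_supp
      matrix_norm.dual_norm_nonneg[OF matrix_norm_block block_Mat, of i "nrm i"]
    unfolding L_def by auto
  have "f (Xk + \<Gamma>) \<le> f Xk
      + (\<Sum>i\<in>S. tr_inner (m i) (n i) (block blk pos (grad f Xk) i) (block blk pos \<Gamma> i))
      + (\<Sum>i\<in>S. L i / 2 * (nrm i (block blk pos \<Gamma> i))\<^sup>2)"
    using diff norms S components_diff_eq_0_if_blocks_eq[OF step_out] smooth S_supp
    unfolding \<Gamma>_def L_def by (intro block_descent) auto
  also have "\<dots> \<le> f Xk + (\<Sum>i\<in>S. 2 * t i * dual_norm (m i) (n i) (nrm i)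
                     (\<lambda>r c. block blk pos (grad f Xk) i r c - block blk pos Mk i r c)
      - t i * dual_norm (m i) (n i) (nrm i) (block blk pos (grad f Xk) i) + L i / 2 * (t i)\<^sup>2)"
    unfolding add.assoc sum.distrib[symmetric] \<Gamma>_def
    using block_lmo_step_bound block_i t_pos step_in by (intro add_left_mono sum_mono) blast
  finally show ?thesis
    unfolding \<Gamma>_def L_def by (simp add: sum.distrib sum_subtractf)
qed

end
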